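(* For every decorated tree $\mathcal{T}$, the set $\mathrm{Cent}(\mathcal{T})$ of central elements of $\mathcal{T}$ is connected.
   Context: A graph is a pair $(X_0,X_1)$ of finite sets such that each element of $X_1$ (an edge) is a $2$-element subset of $X_0$; elements of $X_0$ are cells. A path is a tuple $(x_0,\dots,x_n)$ ($n\ge0$) of cells with $\{x_i,x_{i+1}\}$ an edge for each $i<n$, these edges pairwise distinct; a cell/edge is in the path if it is some $x_i$ / some $\{x_i,x_{i+1}\}$. The graph is a tree if any two cells $x,y$ are joined by a unique path $\gamma_{x,y}$. A decorated tree is $(V,A,E,f,q)$ with $V$ (vertices), $A$ (arrows) finite disjoint sets, $(V\cup A,E)$ a tree, every arrow contained in exactly one edge, $f:A\to\mathbb{Z}$, $q(e,x)\in\mathbb{Z}$ for each $e\in E$, $x\in e$, with $q(e,\alpha)=1$ for $\alpha\in A$, and for each $v\in V$ and distinct edges $e,e'\ni v$, $\gcd(q(e,v),q(e',v))=1$. A path $(w_1,\dots,w_m)$ with $m\ge2$ satisfies $(+)$ if every edge $e\ni w_m$ other than $\{w_{m-1},w_m\}$ has $q(e,w_m)\ge1$ and at most one such edge has $q(e,w_m)>1$. An element $x\in V\cup A$ is central if $\gamma_{x,v}$ satisfies $(+)$ for every $v\in V\setminus\{x\}$; $\mathrm{Cent}(\mathcal{T})$ is the set of central elements. A subset $S\subseteq V\cup A$ is connected if every path $(x_0,\dots,x_n)$ with $x_0,x_n\in S$ has $x_i\in S$ for all $0<i<n$. *)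

theory Defs
  imports Main
begin

definition is_graph :: "'a set \<Rightarrow> 'a set set \<Rightarrow> bool" where
  "is_graph X0 X1 \<longleftrightarrow> finite X0 \<and> finite X1 \<and> (\<forall>e\<in>X1. e \<subseteq> X0 \<and> card e = 2)"

definition path_edges :: "'a list \<Rightarrow> 'a set list" where
  "path_edges p = map (\<lambda>i. {p ! i, p ! Suc i}) [0..<length p - 1]"

definition is_path :: "'a set \<Rightarrow> 'a set set \<Rightarrow> 'a list \<Rightarrow> bool" where
  "is_path X0 X1 p \<longleftrightarrow> p \<noteq> [] \<and> set p \<subseteq> X0 \<and> set (path_edges p) \<subseteq> X1
      \<and> distinct (path_edges p)"

definition is_tree :: "'a set \<Rightarrow> 'a set set \<Rightarrow> bool" where
  "is_tree X0 X1 \<longleftrightarrow> is_graph X0 X1 \<and>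
     (\<forall>x\<in>X0. \<forall>y\<in>X0. \<exists>!p. is_path X0 X1 p \<and> hd p = x \<and> last p = y)"

definition gamma :: "'a set \<Rightarrow> 'a set set \<Rightarrow> 'a \<Rightarrow> 'a \<Rightarrow> 'a list" where
  "gamma X0 X1 x y = (THE p. is_path X0 X1 p \<and> hd p = x \<and> last p = y)"

definition decorated_tree ::
  "'a set \<Rightarrow> 'a set \<Rightarrow> 'a set set \<Rightarrow> ('a \<Rightarrow> int) \<Rightarrow> ('a set \<Rightarrow> 'a \<Rightarrow> int) \<Rightarrow> bool" where
  "decorated_tree V A E f q \<longleftrightarrow>
     finite V \<and> finite A \<and> V \<inter> A = {} \<and> is_tree (V \<union> A) E \<and>
     (\<forall>\<alpha>\<in>A. \<exists>!e. e \<in> E \<and> \<alpha> \<in> e) \<and>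
     (\<forall>e\<in>E. \<forall>\<alpha>\<in>A. \<alpha> \<in> e \<longrightarrow> q e \<alpha> = 1) \<and>
     (\<forall>v\<in>V. \<forall>e\<in>E. \<forall>e'\<in>E. v \<in> e \<and> v \<in> e' \<and> e \<noteq> e' \<longrightarrow> gcd (q e v) (q e' v) = 1)"

definition plus_cond :: "'a set set \<Rightarrow> ('a set \<Rightarrow> 'a \<Rightarrow> int) \<Rightarrow> 'a list \<Rightarrow> bool" where
  "plus_cond E q w \<longleftrightarrow> length w \<ge> 2 \<and>
     (let wm = last w; e0 = {w ! (length w - 2), wm} in
       (\<forall>e\<in>E. wm \<in> e \<and> e \<noteq> e0 \<longrightarrow> q e wm \<ge> 1) \<and>
       card {e\<in>E. wm \<in> e \<and> e \<noteq> e0 \<and> q e wm > 1} \<le> 1)"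

definition central ::
  "'a set \<Rightarrow> 'a set \<Rightarrow> 'a set set \<Rightarrow> ('a set \<Rightarrow> 'a \<Rightarrow> int) \<Rightarrow> 'a \<Rightarrow> bool" where
  "central V A E q x \<longleftrightarrow> x \<in> V \<union> A \<and>
     (\<forall>v\<in>V - {x}. plus_cond E q (gamma (V \<union> A) E x v))"

definition Cent :: "'a set \<Rightarrow> 'a set \<Rightarrow> 'a set set \<Rightarrow> ('a set \<Rightarrow> 'a \<Rightarrow> int) \<Rightarrow> 'a set" where
  "Cent V A E q = {x. central V A E q x}"

definition connected_in :: "'a set \<Rightarrow> 'a set set \<Rightarrow> 'a set \<Rightarrow> bool" where
  "connected_in X0 X1 S \<longleftrightarrow> (\<forall>p. is_path X0 X1 p \<and> hd p \<in> S \<and> last p \<in> S \<longrightarrow>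
      (\<forall>i. 0 < i \<and> i < length p - 1 \<longrightarrow> p ! i \<in> S))"

end

theory Submission
  imports Defs
begin

text \<open>Let \<open>z\<close> be an interior cell of a path between central elements \<open>x\<close> and \<open>y\<close>, and let
  \<open>v \<noteq> z\<close> be a vertex. The paths from \<open>z\<close> towards \<open>x\<close> and towards \<open>y\<close> leave \<open>z\<close> through
  different neighbours, so \<open>\<gamma>(z,v)\<close> leaves \<open>z\<close> through a neighbour different from one of
  them, say from the one towards \<open>x\<close>. In a tree, paths from \<open>z\<close> leaving through different
  neighbours meet only in \<open>z\<close>, hence \<open>\<gamma>(x,v)\<close> is \<open>\<gamma>(x,z)\<close> followed by \<open>\<gamma>(z,v)\<close>.
  Condition (+) only looks at the last edge of a path, so it passes from \<open>\<gamma>(x,v)\<close> to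
  \<open>\<gamma>(z,v)\<close>.\<close>

lemma path_edges_Nil [simp]: "path_edges [] = []"
  by (simp add: path_edges_def)

lemma path_edges_singleton [simp]: "path_edges [x] = []"
  by (simp add: path_edges_def)

lemma path_edges_Cons_Cons [simp]: "path_edges (x # y # xs) = {x, y} # path_edges (y # xs)"
  unfolding path_edges_def
  by (simp add: upt_conv_Cons map_Suc_upt[symmetric] del: upt_Suc)

lemma path_edges_append_shared:
  "path_edges (xs @ z # ys) = path_edges (xs @ [z]) @ path_edges (z # ys)"
proof (induction xs)
  case (Cons x xs)
  then show ?case
    by (cases xs) simp_all
qed simp

lemma path_edges_rev: "path_edges (rev p) = rev (path_edges p)"
proof (induction p rule: induct_list012)
  case (3 x y p)
  have "path_edges (rev (x # y # p)) = path_edges (rev p @ [y]) @ path_edges [y, x]"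
    using path_edges_append_shared[of "rev p" y "[x]"] by simp
  with 3 show ?case by (simp add: insert_commute)
qed simp_all

lemma path_edges_subset_set: "e \<in> set (path_edges p) \<Longrightarrow> e \<subseteq> set p"
  by (induction p rule: induct_list012) auto

lemma distinct_path_edges: "distinct p \<Longrightarrow> distinct (path_edges p)"
  by (induction p rule: induct_list012) (auto dest: path_edges_subset_set)

lemma is_path_rev: "is_path X0 X1 p \<Longrightarrow> is_path X0 X1 (rev p)"
  by (simp add: is_path_def path_edges_rev)

lemma is_path_split:
  assumes "is_path X0 X1 (xs @ z # ys)"
  shows "is_path X0 X1 (xs @ [z])" and "is_path X0 X1 (z # ys)"
  using assms unfolding is_path_def path_edges_append_shared[of xs z ys] by simp_all

lemma is_path_join:
  assumes "is_path X0 X1 (xs @ [z])" "is_path X0 X1 (z # ys)" "distinct (xs @ z # ys)"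
  shows "is_path X0 X1 (xs @ z # ys)"
  using assms distinct_path_edges[OF assms(3)]
  unfolding is_path_def path_edges_append_shared[of xs z ys] by simp

lemma tree_path_unique:
  assumes "is_tree X0 X1" "is_path X0 X1 p" "is_path X0 X1 p'" "hd p = hd p'" "last p = last p'"
  shows "p = p'"
proof -
  have "hd p \<in> X0" "last p \<in> X0"
    using assms(2) by (auto simp: is_path_def)
  then have "\<exists>!r. is_path X0 X1 r \<and> hd r = hd p \<and> last r = last p"
    using assms(1) unfolding is_tree_def by blast
  with assms(2-5) show ?thesis
    by metis
qed

lemma gamma_path:
  assumes "is_tree X0 X1" "x \<in> X0" "y \<in> X0"
  shows "is_path X0 X1 (gamma X0 X1 x y)" "hd (gamma X0 X1 x y) = x" "last (gamma X0 X1 x y) = y"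
proof -
  have "\<exists>!p. is_path X0 X1 p \<and> hd p = x \<and> last p = y"
    using assms unfolding is_tree_def by blast
  then have "is_path X0 X1 (gamma X0 X1 x y) \<and> hd (gamma X0 X1 x y) = x \<and> last (gamma X0 X1 x y) = y"
    unfolding gamma_def by (rule theI')
  then show "is_path X0 X1 (gamma X0 X1 x y)" "hd (gamma X0 X1 x y) = x" "last (gamma X0 X1 x y) = y"
    by auto
qed

lemma gamma_eqI:
  assumes "is_tree X0 X1" "is_path X0 X1 p" "hd p = x" "last p = y"
  shows "gamma X0 X1 x y = p"
proof -
  have "x \<in> X0" "y \<in> X0"
    using assms(2-4) by (auto simp: is_path_def)
  then show ?thesis
    using assms gamma_path tree_path_unique by metis
qed

lemma tree_path_distinct:
  assumes T: "is_tree X0 X1" and p: "is_path X0 X1 p"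
  shows "distinct p"
proof (rule ccontr)
  assume "\<not> distinct p"
  then obtain xs ys zs y where "p = xs @ [y] @ ys @ [y] @ zs"
    using not_distinct_decomp by blast
  with p have "is_path X0 X1 ((y # ys) @ y # zs)"
    using is_path_split(2)[of X0 X1 xs y "ys @ y # zs"] by simp
  then have loop: "is_path X0 X1 (y # ys @ [y])"
    using is_path_split(1) by fastforce
  then have "is_path X0 X1 [y]"
    by (simp add: is_path_def)
  from tree_path_unique[OF T loop this] show False
    by simp
qed

text \<open>A common cell would be the end of two different paths starting at \<open>z\<close>.\<close>
lemma tree_paths_diverging_disjoint:
  assumes T: "is_tree X0 X1"
    and px: "is_path X0 X1 (z # xs)" and py: "is_path X0 X1 (z # ys)"
    and diverge: "hd xs \<noteq> hd ys"
  shows "set xs \<inter> set ys = {}"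
proof (rule ccontr)
  assume "set xs \<inter> set ys \<noteq> {}"
  then obtain w where "w \<in> set xs" "w \<in> set ys"
    by blast
  then obtain a b c d where xs: "xs = a @ w # b" and ys: "ys = c @ w # d"
    by (metis split_list)
  have "is_path X0 X1 (z # a @ [w])" "is_path X0 X1 (z # c @ [w])"
    using is_path_split(1)[of X0 X1 "z # a" w b] is_path_split(1)[of X0 X1 "z # c" w d]
      px py xs ys by simp_all
  then have "a = c"
    using tree_path_unique[OF T] by fastforce
  with xs ys diverge show False
    by (cases a) auto
qed

lemma plus_cond_append:
  assumes "length ys \<ge> 2"
  shows "plus_cond E q (xs @ ys) = plus_cond E q ys"
proof -
  have "ys \<noteq> []"
    using assms by auto
  then have "last (xs @ ys) = last ys"
    by simp
  moreover have "(xs @ ys) ! (length (xs @ ys) - 2) = ys ! (length ys - 2)"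
    using assms nth_append_length_plus[of xs ys "length ys - 2"] by simp
  ultimately show ?thesis
    using assms unfolding plus_cond_def Let_def by simp
qed

lemma plus_cond_of_central_diverging:
  assumes T: "is_tree (V \<union> A) E" and c: "central V A E q c"
    and px: "is_path (V \<union> A) E (z # xs)" "xs \<noteq> []" "last xs = c"
    and py: "is_path (V \<union> A) E (z # ys)" "ys \<noteq> []" "last ys = v" "v \<in> V"
    and diverge: "hd xs \<noteq> hd ys"
  shows "plus_cond E q (z # ys)"
proof -
  let ?r = "rev xs @ z # ys"
  \<comment> \<open>\<open>\<gamma>(c,v)\<close> is \<open>?r\<close>, which ends with the same edge as \<open>z # ys\<close>.\<close>
  have disjoint: "set xs \<inter> set ys = {}"
    using tree_paths_diverging_disjoint[OF T px(1) py(1) diverge] .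
  have "distinct (z # xs)" "distinct (z # ys)"
    using tree_path_distinct[OF T] px(1) py(1) by blast+
  with disjoint have distinct: "distinct ?r"
    by auto
  have "is_path (V \<union> A) E (rev xs @ [z])"
    using is_path_rev[OF px(1)] by simp
  from is_path_join[OF this py(1) distinct] have path: "is_path (V \<union> A) E ?r" .
  have hd: "hd ?r = c" and last: "last ?r = v"
    using px(2,3) py(2,3) by (simp_all add: hd_rev)
  have "c \<noteq> v"
    using disjoint px(2,3) py(2,3) by (auto dest!: last_in_set)
  then have "plus_cond E q (gamma (V \<union> A) E c v)"
    using c py(4) by (simp add: central_def)
  then have "plus_cond E q ?r"
    using gamma_eqI[OF T path hd last] by simp
  moreover have "length (z # ys) \<ge> 2"
    using py(2) by (cases ys) auto
  ultimately show ?thesis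
    using plus_cond_append[of "z # ys" E q "rev xs"] by simp
qed

lemma central_path_interior:
  assumes T: "is_tree (V \<union> A) E" and p: "is_path (V \<union> A) E (xs @ z # ys)"
    and "xs \<noteq> []" "ys \<noteq> []"
    and cx: "central V A E q (hd xs)" and cy: "central V A E q (last ys)"
  shows "central V A E q z"
  unfolding central_def
proof (intro conjI ballI)
  show z: "z \<in> V \<union> A"
    using p by (simp add: is_path_def)
  fix v assume v: "v \<in> V - {z}"
  let ?g = "gamma (V \<union> A) E z v"
  have "is_path (V \<union> A) E ?g" "hd ?g = z" "last ?g = v" "?g \<noteq> []"
    using gamma_path[OF T z, of v] v by (auto simp: is_path_def)
  then obtain gs where g: "?g = z # gs" "is_path (V \<union> A) E (z # gs)" "last (z # gs) = v"
    by (metis list.collapse)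
  then have "gs \<noteq> []" "last gs = v"
    using v by auto
  have px: "is_path (V \<union> A) E (z # rev xs)" and py: "is_path (V \<union> A) E (z # ys)"
    using is_path_rev[OF is_path_split(1)[OF p]] is_path_split(2)[OF p] by simp_all
  have "last xs \<noteq> hd ys"
    using tree_path_distinct[OF T p] \<open>xs \<noteq> []\<close> \<open>ys \<noteq> []\<close>
    by (cases xs rule: rev_cases; cases ys) auto
  then consider "hd gs \<noteq> hd (rev xs)" | "hd gs \<noteq> hd ys"
    using \<open>xs \<noteq> []\<close> by (force simp: hd_rev)
  then have "plus_cond E q (z # gs)"
  proof cases
    case 1
    with px show ?thesis
      using plus_cond_of_central_diverging[OF T cx _ _ _ g(2) \<open>gs \<noteq> []\<close> \<open>last gs = v\<close>] v
        \<open>xs \<noteq> []\<close> by (simp add: last_rev)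
  next
    case 2
    with py show ?thesis
      using plus_cond_of_central_diverging[OF T cy _ _ _ g(2) \<open>gs \<noteq> []\<close> \<open>last gs = v\<close>] v
        \<open>ys \<noteq> []\<close> by simp
  qed
  with g(1) show "plus_cond E q ?g"
    by simp
qed

theorem lemma5p3:
  fixes V A :: "'a set" and E :: "'a set set" and f :: "'a \<Rightarrow> int"
    and q :: "'a set \<Rightarrow> 'a \<Rightarrow> int"
  assumes "decorated_tree V A E f q"
  shows "connected_in (V \<union> A) E (Cent V A E q)"
  unfolding connected_in_def
proof (intro allI impI)
  fix p i
  assume p: "is_path (V \<union> A) E p \<and> hd p \<in> Cent V A E q \<and> last p \<in> Cent V A E q"
    and i: "0 < i \<and> i < length p - 1"
  have T: "is_tree (V \<union> A) E"
    using assms by (simp add: decorated_tree_def)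
  define xs z ys where "xs = take i p" and "z = p ! i" and "ys = drop (Suc i) p"
  have "0 < i" "Suc i < length p"
    using i by linarith+
  then have split: "p = xs @ z # ys" and "xs \<noteq> []" "ys \<noteq> []"
    unfolding xs_def z_def ys_def by (auto intro: id_take_nth_drop)
  moreover have "central V A E q (hd xs)" "central V A E q (last ys)"
    using p \<open>xs \<noteq> []\<close> \<open>ys \<noteq> []\<close> unfolding split by (simp_all add: Cent_def)
  ultimately have "central V A E q z"
    using central_path_interior[OF T] p by blast
  then show "p ! i \<in> Cent V A E q"
    by (simp add: Cent_def z_def)
qed

end
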